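(* Let $d\ge1$, let $\|\cdot\|$ be a norm on $\mathbb{R}^d$, let $\epsilon\ge0$, and consider either of the following two settings. (i) Least-squares regression: $k=1$, $(X,Y)$ is a random pair in $\mathbb{R}^d\times\mathbb{R}$, $\mathcal{F}$ is a class of functions $\mathbb{R}^d\to\mathbb{R}$, and the loss is $\ell(u,v)=(u-v)^2/2$. (ii) Multiclass classification: $k>1$, $\mathcal{F}$ is a class of functions from $\mathbb{R}^d$ to the unit simplex $\triangle^{k-1}=\{u\in\mathbb{R}^k: u_j\ge0,\ \sum_j u_j=1\}$, $(X,Y)$ is a random pair where $X\in\mathbb{R}^d$ and $Y$ takes values in the set of canonical basis vectors of $\mathbb{R}^k$, and the loss is the Kullback--Leibler divergence $\ell(u,v)=\sum_{j=1}^k v_j\log\frac{v_j}{u_j}$ (with the convention $0\log(0/u)=0$). In either setting, define for $f\in\mathcal{F}$ the mean local smoothness factor $$L_\epsilon(f)=\mathbb{E}\sup_{\Delta:\|\Delta\|\le\epsilon}\|f(X+\Delta)-f(X)\|_1^2.$$ Then for every $f\in\mathcal{F}$, $$R(f)+R_\epsilon(f)\ge\frac16\max\left\{L_\epsilon(f),\ \mathbb{E}\|Y-Y'\|_1^2\right\},$$ where, conditioned on $X$, $Y'$ is independent of $Y$ and has the same conditional distribution as $Y$ given $X$.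
   Context: $R(f)=\mathbb{E}\,\ell(f(X),Y)$ is the standard risk and $R_\epsilon(f)=\mathbb{E}\left(\sup_{\Delta\in\mathbb{R}^d:\|\Delta\|\le\epsilon}\ell(f(X+\Delta),Y)\right)$ is the adversarial risk, with $\ell$ the loss of the respective setting. $\|\cdot\|_1$ is the $\ell_1$ norm on $\mathbb{R}^k$ (for $k=1$, the absolute value). All expectations are assumed well defined (possibly $+\infty$). *)

theory Defs
  imports "HOL-Probability.Probability"
begin

definition is_norm :: "('v::real_vector \<Rightarrow> real) \<Rightarrow> bool" where
  "is_norm N \<longleftrightarrow> (\<forall>x. N x = 0 \<longleftrightarrow> x = 0) \<and> (\<forall>c x. N (c *\<^sub>R x) = \<bar>c\<bar> * N x)
     \<and> (\<forall>x y. N (x + y) \<le> N x + N y)"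

definition l1norm :: "real ^ 'k \<Rightarrow> real" where
  "l1norm u = (\<Sum>j\<in>UNIV. \<bar>u $ j\<bar>)"

definition unit_simplex :: "(real ^ 'k) set" where
  "unit_simplex = {u. (\<forall>j. 0 \<le> u $ j) \<and> (\<Sum>j\<in>UNIV. u $ j) = 1}"

definition basis_vecs :: "(real ^ 'k) set" where
  "basis_vecs = {axis j 1 | j. True}"

definition sq_loss :: "real \<Rightarrow> real \<Rightarrow> ennreal" where
  "sq_loss u v = ennreal ((u - v)\<^sup>2 / 2)"

text \<open>Kullback--Leibler divergence sum_j v_j log(v_j/u_j) with 0 log(0/u) = 0
  and v_j log(v_j/0) = +infinity for v_j > 0.\<close>
definition kl_loss :: "real ^ 'k \<Rightarrow> real ^ 'k \<Rightarrow> ennreal" where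
  "kl_loss u v = (if \<exists>j. 0 < v $ j \<and> u $ j \<le> 0 then \<infinity>
     else ennreal (\<Sum>j\<in>{j. 0 < v $ j}. v $ j * ln (v $ j / u $ j)))"

definition risk :: "'a measure \<Rightarrow> ('a \<Rightarrow> 'x) \<Rightarrow> ('a \<Rightarrow> 'y) \<Rightarrow> ('u \<Rightarrow> 'y \<Rightarrow> ennreal)
    \<Rightarrow> ('x \<Rightarrow> 'u) \<Rightarrow> ennreal" where
  "risk M X Y loss f = (\<integral>\<^sup>+ \<omega>. loss (f (X \<omega>)) (Y \<omega>) \<partial>M)"

definition adv_loss :: "('x::real_vector \<Rightarrow> real) \<Rightarrow> real \<Rightarrow> ('u \<Rightarrow> 'y \<Rightarrow> ennreal)
    \<Rightarrow> ('x \<Rightarrow> 'u) \<Rightarrow> 'x \<Rightarrow> 'y \<Rightarrow> ennreal" where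
  "adv_loss N \<epsilon> loss f x y = (SUP \<Delta>\<in>{\<Delta>. N \<Delta> \<le> \<epsilon>}. loss (f (x + \<Delta>)) y)"

definition adv_risk :: "'a measure \<Rightarrow> ('x::real_vector \<Rightarrow> real) \<Rightarrow> real \<Rightarrow> ('a \<Rightarrow> 'x)
    \<Rightarrow> ('a \<Rightarrow> 'y) \<Rightarrow> ('u \<Rightarrow> 'y \<Rightarrow> ennreal) \<Rightarrow> ('x \<Rightarrow> 'u) \<Rightarrow> ennreal" where
  "adv_risk M N \<epsilon> X Y loss f = (\<integral>\<^sup>+ \<omega>. adv_loss N \<epsilon> loss f (X \<omega>) (Y \<omega>) \<partial>M)"

definition loc_var :: "('x::real_vector \<Rightarrow> real) \<Rightarrow> real \<Rightarrow> ('u::real_vector \<Rightarrow> real)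
    \<Rightarrow> ('x \<Rightarrow> 'u) \<Rightarrow> 'x \<Rightarrow> ennreal" where
  "loc_var N \<epsilon> nrm f x = (SUP \<Delta>\<in>{\<Delta>. N \<Delta> \<le> \<epsilon>}. ennreal ((nrm (f (x + \<Delta>) - f x))\<^sup>2))"

definition smooth_factor :: "'a measure \<Rightarrow> ('x::real_vector \<Rightarrow> real) \<Rightarrow> real
    \<Rightarrow> ('u::real_vector \<Rightarrow> real) \<Rightarrow> ('a \<Rightarrow> 'x) \<Rightarrow> ('x \<Rightarrow> 'u) \<Rightarrow> ennreal" where
  "smooth_factor M N \<epsilon> nrm X f = (\<integral>\<^sup>+ \<omega>. loc_var N \<epsilon> nrm f (X \<omega>) \<partial>M)"

text \<open>Y' is, conditionally on X, an independent copy of Y: there is a Markov kernel K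
  (regular conditional distribution of Y given X) such that the joint law of (X, Y, Y')
  is  P_X(dx) K(x,dy) K(x,dy').\<close>
definition cond_indep_copy :: "'a measure \<Rightarrow> ('a \<Rightarrow> 'x::topological_space)
    \<Rightarrow> ('a \<Rightarrow> 'y::topological_space) \<Rightarrow> ('a \<Rightarrow> 'y) \<Rightarrow> bool" where
  "cond_indep_copy M X Y Y' \<longleftrightarrow> (\<exists>K. K \<in> borel \<rightarrow>\<^sub>M prob_algebra borel \<and>
     distr M (borel \<Otimes>\<^sub>M borel \<Otimes>\<^sub>M borel) (\<lambda>\<omega>. (X \<omega>, Y \<omega>, Y' \<omega>)) =
     distr M borel X \<bind>
       (\<lambda>x. distr (K x \<Otimes>\<^sub>M K x) (borel \<Otimes>\<^sub>M borel \<Otimes>\<^sub>M borel) (\<lambda>(y, y'). (x, y, y'))))"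

end

theory Submission
  imports Defs
begin

text \<open>Both losses dominate half the squared distance of the prediction from the label,
  \<open>\<parallel>u - y\<parallel>\<^sup>2 \<le> 2 \<ell>(u, y)\<close> (an equality for the square loss; Pinsker's inequality for a point mass
  in the Kullback--Leibler case). Hence, by \<open>(a + b)\<^sup>2 \<le> 2a\<^sup>2 + 2b\<^sup>2\<close> and the triangle inequality
  through the label \<open>Y\<close>, the local variation \<open>\<parallel>f(X + \<Delta>) - f(X)\<parallel>\<^sup>2\<close> is at most
  \<open>4 \<ell>(f(X + \<Delta>), Y) + 4 \<ell>(f(X), Y)\<close>, so \<open>L\<^sub>\<epsilon>(f) \<le> 4 (R(f) + R\<^sub>\<epsilon>(f))\<close>. Likewise
  \<open>\<parallel>Y - Y'\<parallel>\<^sup>2 \<le> 2 \<parallel>Y - f(X)\<parallel>\<^sup>2 + 2 \<parallel>Y' - f(X)\<parallel>\<^sup>2\<close>, and since \<open>(X, Y')\<close> has the same law as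
  \<open>(X, Y)\<close> both terms have the same expectation, giving
  \<open>\<bbbE>\<parallel>Y - Y'\<parallel>\<^sup>2 \<le> 8 R(f) \<le> 4 (R(f) + R\<^sub>\<epsilon>(f))\<close>.\<close>

lemma nn_integral_pair_snd_eq_fst:
  assumes "prob_space K" and h: "h \<in> borel_measurable K"
  shows "(\<integral>\<^sup>+p. h (snd p) \<partial>(K \<Otimes>\<^sub>M K)) = (\<integral>\<^sup>+p. h (fst p) \<partial>(K \<Otimes>\<^sub>M K))"
proof -
  interpret K: prob_space K by fact
  interpret pair_sigma_finite K K ..
  have "(\<integral>\<^sup>+p. h (snd p) \<partial>(K \<Otimes>\<^sub>M K)) = (\<integral>\<^sup>+y. h y \<partial>K)"
    using K.nn_integral_fst[of "\<lambda>p. h (snd p)" K] h by (simp add: K.emeasure_space_1)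
  also have "\<dots> = (\<integral>\<^sup>+p. h (fst p) \<partial>(K \<Otimes>\<^sub>M K))"
    using nn_integral_snd[of "\<lambda>p. h (fst p)"] h by (simp add: K.emeasure_space_1)
  finally show ?thesis .
qed

lemma nn_integral_kernel_disintegration:
  fixes X :: "'a \<Rightarrow> 'x::topological_space" and Y Y' :: "'a \<Rightarrow> 'y::topological_space"
  defines "B3 \<equiv> borel \<Otimes>\<^sub>M borel \<Otimes>\<^sub>M (borel :: 'y measure)"
  assumes K: "K \<in> borel \<rightarrow>\<^sub>M prob_algebra borel"
    and law: "distr M B3 (\<lambda>\<omega>. (X \<omega>, Y \<omega>, Y' \<omega>)) =
      distr M borel X \<bind> (\<lambda>x. distr (K x \<Otimes>\<^sub>M K x) B3 (\<lambda>(y, y'). (x, y, y')))"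
    and [measurable]: "X \<in> borel_measurable M" "Y \<in> borel_measurable M" "Y' \<in> borel_measurable M"
    and h[measurable]: "h \<in> borel_measurable B3"
  shows "(\<integral>\<^sup>+\<omega>. h (X \<omega>, Y \<omega>, Y' \<omega>) \<partial>M)
    = (\<integral>\<^sup>+x. \<integral>\<^sup>+p. h (x, fst p, snd p) \<partial>(K x \<Otimes>\<^sub>M K x) \<partial>distr M borel X)"
proof -
  have [measurable]: "K \<in> borel \<rightarrow>\<^sub>M subprob_algebra borel"
    using K by (rule measurable_prob_algebraD)
  have kernel: "(\<lambda>x. distr (K x \<Otimes>\<^sub>M K x) B3 (\<lambda>(y, y'). (x, y, y')))
      \<in> distr M borel X \<rightarrow>\<^sub>M subprob_algebra B3"
    unfolding measurable_cong_sets[OF sets_distr refl] B3_def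
    by (rule measurable_distr2[where M="borel \<Otimes>\<^sub>M borel"], measurable,
        rule measurable_pair_measure; measurable)
  have inner: "(\<integral>\<^sup>+t. h t \<partial>distr (K x \<Otimes>\<^sub>M K x) B3 (\<lambda>(y, y'). (x, y, y')))
      = (\<integral>\<^sup>+p. h (x, fst p, snd p) \<partial>(K x \<Otimes>\<^sub>M K x))" for x
  proof -
    have "sets (K x) = sets borel"
      using measurable_space[OF K] by (simp add: space_prob_algebra)
    then have "(\<lambda>(y, y'). (x, y, y')) \<in> K x \<Otimes>\<^sub>M K x \<rightarrow>\<^sub>M B3"
      unfolding measurable_cong_sets[OF sets_pair_measure_cong refl] B3_def by measurable
    then show ?thesis
      by (simp add: nn_integral_distr split_beta')
  qed
  have "(\<integral>\<^sup>+\<omega>. h (X \<omega>, Y \<omega>, Y' \<omega>) \<partial>M) = (\<integral>\<^sup>+t. h t \<partial>distr M B3 (\<lambda>\<omega>. (X \<omega>, Y \<omega>, Y' \<omega>)))"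
    using h by (simp add: nn_integral_distr B3_def)
  also have "\<dots> = (\<integral>\<^sup>+x. \<integral>\<^sup>+t. h t \<partial>distr (K x \<Otimes>\<^sub>M K x) B3 (\<lambda>(y, y'). (x, y, y')) \<partial>distr M borel X)"
    unfolding law by (rule nn_integral_bind[OF h kernel])
  finally show ?thesis
    by (simp only: inner)
qed

lemma nn_integral_cond_indep_copy_swap:
  fixes X :: "'a \<Rightarrow> 'x::topological_space" and Y Y' :: "'a \<Rightarrow> 'y::topological_space"
  assumes "cond_indep_copy M X Y Y'"
    and [measurable]: "X \<in> borel_measurable M" "Y \<in> borel_measurable M" "Y' \<in> borel_measurable M"
    and [measurable]: "g \<in> borel_measurable (borel \<Otimes>\<^sub>M borel)"
  shows "(\<integral>\<^sup>+\<omega>. g (X \<omega>, Y' \<omega>) \<partial>M) = (\<integral>\<^sup>+\<omega>. g (X \<omega>, Y \<omega>) \<partial>M)"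
proof -
  obtain K where K: "K \<in> borel \<rightarrow>\<^sub>M prob_algebra borel" and
    law: "distr M (borel \<Otimes>\<^sub>M borel \<Otimes>\<^sub>M borel) (\<lambda>\<omega>. (X \<omega>, Y \<omega>, Y' \<omega>)) =
      distr M borel X \<bind> (\<lambda>x. distr (K x \<Otimes>\<^sub>M K x) (borel \<Otimes>\<^sub>M borel \<Otimes>\<^sub>M borel) (\<lambda>(y, y'). (x, y, y')))"
    using assms(1) unfolding cond_indep_copy_def by blast
  have swap: "(\<integral>\<^sup>+p. g (x, snd p) \<partial>(K x \<Otimes>\<^sub>M K x)) = (\<integral>\<^sup>+p. g (x, fst p) \<partial>(K x \<Otimes>\<^sub>M K x))" for x
  proof (rule nn_integral_pair_snd_eq_fst)
    have "K x \<in> space (prob_algebra borel)"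
      using measurable_space[OF K] by simp
    then show "prob_space (K x)" and "(\<lambda>y. g (x, y)) \<in> borel_measurable (K x)"
      by (auto simp: space_prob_algebra cong: measurable_cong_sets)
  qed
  have "(\<integral>\<^sup>+\<omega>. g (X \<omega>, Y' \<omega>) \<partial>M) = (\<integral>\<^sup>+x. \<integral>\<^sup>+p. g (x, snd p) \<partial>(K x \<Otimes>\<^sub>M K x) \<partial>distr M borel X)"
    using nn_integral_kernel_disintegration[OF K law, of "\<lambda>t. g (fst t, snd (snd t))"] by simp
  also have "\<dots> = (\<integral>\<^sup>+\<omega>. g (X \<omega>, Y \<omega>) \<partial>M)"
    using nn_integral_kernel_disintegration[OF K law, of "\<lambda>t. g (fst t, fst (snd t))"] by (simp add: swap)
  finally show ?thesis .
qed

lemma adv_loss_ge: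
  assumes "N \<Delta> \<le> \<epsilon>"
  shows "loss (f (x + \<Delta>)) y \<le> adv_loss N \<epsilon> loss f x y"
  unfolding adv_loss_def by (rule SUP_upper) (use assms in simp)

lemma loss_le_adv_loss:
  assumes "is_norm N" and "0 \<le> \<epsilon>"
  shows "loss (f x) y \<le> adv_loss N \<epsilon> loss f x y"
proof -
  have "N 0 = 0"
    using assms(1) by (simp add: is_norm_def)
  then show ?thesis
    using adv_loss_ge[of N 0 \<epsilon> loss f x y] assms(2) by simp
qed

lemma risk_le_adv_risk:
  assumes "is_norm N" and "0 \<le> \<epsilon>"
  shows "risk M X Y loss f \<le> adv_risk M N \<epsilon> X Y loss f"
  unfolding risk_def adv_risk_def by (intro nn_integral_mono loss_le_adv_loss assms)

context
  fixes nrm :: "'u::euclidean_space \<Rightarrow> real"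
  assumes nrm_nonneg: "\<And>z. 0 \<le> nrm z"
    and nrm_triangle: "\<And>a b. nrm (a + b) \<le> nrm a + nrm b"
    and nrm_minus: "\<And>z. nrm (- z) = nrm z"
begin

lemma sq_nrm_diff_le_through:
  "ennreal ((nrm (a - b))\<^sup>2) \<le> 2 * ennreal ((nrm (a - y))\<^sup>2) + 2 * ennreal ((nrm (b - y))\<^sup>2)"
proof -
  have "nrm (a - b) \<le> nrm (a - y) + nrm (b - y)"
    using nrm_triangle[of "a - y" "- (b - y)"] nrm_minus[of "b - y"] by simp
  then have "(nrm (a - b))\<^sup>2 \<le> (nrm (a - y) + nrm (b - y))\<^sup>2"
    by (simp add: power_mono nrm_nonneg)
  also have "\<dots> \<le> 2 * (nrm (a - y))\<^sup>2 + 2 * (nrm (b - y))\<^sup>2"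
    using sum_squares_ge_zero[of "nrm (a - y) - nrm (b - y)" 0] by (simp add: power2_eq_square algebra_simps)
  finally have "ennreal ((nrm (a - b))\<^sup>2) \<le> ennreal (2 * (nrm (a - y))\<^sup>2 + 2 * (nrm (b - y))\<^sup>2)"
    by (rule ennreal_leI)
  then show ?thesis
    by (simp add: ennreal_plus[symmetric] ennreal_mult'')
qed

lemma loc_var_le_loss_adv_loss:
  assumes "\<And>z. ennreal ((nrm (f z - y))\<^sup>2) \<le> 2 * loss (f z) y"
  shows "loc_var N \<epsilon> nrm f x \<le> 4 * loss (f x) y + 4 * adv_loss N \<epsilon> loss f x y"
  unfolding loc_var_def
proof (rule SUP_least)
  fix \<Delta> assume "\<Delta> \<in> {\<Delta>. N \<Delta> \<le> \<epsilon>}"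
  then have adv: "loss (f (x + \<Delta>)) y \<le> adv_loss N \<epsilon> loss f x y"
    by (simp add: adv_loss_ge)
  have "ennreal ((nrm (f (x + \<Delta>) - f x))\<^sup>2)
      \<le> 2 * ennreal ((nrm (f (x + \<Delta>) - y))\<^sup>2) + 2 * ennreal ((nrm (f x - y))\<^sup>2)"
    by (rule sq_nrm_diff_le_through)
  also have "\<dots> \<le> 2 * (2 * loss (f (x + \<Delta>)) y) + 2 * (2 * loss (f x) y)"
    using assms by (intro add_mono mult_left_mono) auto
  also have "\<dots> \<le> 2 * (2 * adv_loss N \<epsilon> loss f x y) + 2 * (2 * loss (f x) y)"
    using adv by (intro add_mono mult_left_mono) auto
  also have "\<dots> = 4 * loss (f x) y + 4 * adv_loss N \<epsilon> loss f x y"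
    by (simp add: mult.assoc[symmetric] add.commute)
  finally show "ennreal ((nrm (f (x + \<Delta>) - f x))\<^sup>2) \<le> 4 * loss (f x) y + 4 * adv_loss N \<epsilon> loss f x y" .
qed

lemma smooth_factor_le_risks:
  assumes "\<And>\<omega> z. \<omega> \<in> space M \<Longrightarrow> ennreal ((nrm (f z - Y \<omega>))\<^sup>2) \<le> 2 * loss (f z) (Y \<omega>)"
    and "(\<lambda>\<omega>. loss (f (X \<omega>)) (Y \<omega>)) \<in> borel_measurable M"
    and "(\<lambda>\<omega>. adv_loss N \<epsilon> loss f (X \<omega>) (Y \<omega>)) \<in> borel_measurable M"
  shows "smooth_factor M N \<epsilon> nrm X f \<le> 4 * risk M X Y loss f + 4 * adv_risk M N \<epsilon> X Y loss f"
proof -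
  have "smooth_factor M N \<epsilon> nrm X f
      \<le> (\<integral>\<^sup>+\<omega>. 4 * loss (f (X \<omega>)) (Y \<omega>) + 4 * adv_loss N \<epsilon> loss f (X \<omega>) (Y \<omega>) \<partial>M)"
    unfolding smooth_factor_def
    by (intro nn_integral_mono loc_var_le_loss_adv_loss assms(1))
  also have "\<dots> = 4 * risk M X Y loss f + 4 * adv_risk M N \<epsilon> X Y loss f"
    using assms(2,3) by (simp add: risk_def adv_risk_def nn_integral_add nn_integral_cmult)
  finally show ?thesis .
qed

lemma cond_indep_copy_dispersion_le_risk:
  fixes X :: "'a \<Rightarrow> 'x::real_normed_vector"
  assumes "cond_indep_copy M X Y Y'"
    and [measurable]: "X \<in> borel_measurable M" "Y \<in> borel_measurable M" "Y' \<in> borel_measurable M"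
      "f \<in> borel_measurable borel" "nrm \<in> borel_measurable borel"
    and loss_meas: "(\<lambda>\<omega>. loss (f (X \<omega>)) (Y \<omega>)) \<in> borel_measurable M"
    and bound: "\<And>\<omega> z. \<omega> \<in> space M \<Longrightarrow> ennreal ((nrm (f z - Y \<omega>))\<^sup>2) \<le> 2 * loss (f z) (Y \<omega>)"
  shows "(\<integral>\<^sup>+\<omega>. ennreal ((nrm (Y \<omega> - Y' \<omega>))\<^sup>2) \<partial>M) \<le> 8 * risk M X Y loss f"
proof -
  define g where "g p = ennreal ((nrm (snd p - f (fst p)))\<^sup>2)" for p :: "'x \<times> 'u"
  have [measurable]: "g \<in> borel_measurable (borel \<Otimes>\<^sub>M borel)"
    unfolding g_def by measurable
  have risk_bound: "(\<integral>\<^sup>+\<omega>. g (X \<omega>, Y \<omega>) \<partial>M) \<le> 2 * risk M X Y loss f"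
  proof -
    have "(\<integral>\<^sup>+\<omega>. g (X \<omega>, Y \<omega>) \<partial>M) \<le> (\<integral>\<^sup>+\<omega>. 2 * loss (f (X \<omega>)) (Y \<omega>) \<partial>M)"
      unfolding g_def using bound nrm_minus[of "f _ - Y _"] by (intro nn_integral_mono) simp
    also have "\<dots> = 2 * risk M X Y loss f"
      using loss_meas by (simp add: risk_def nn_integral_cmult)
    finally show ?thesis .
  qed
  have "(\<integral>\<^sup>+\<omega>. ennreal ((nrm (Y \<omega> - Y' \<omega>))\<^sup>2) \<partial>M)
      \<le> (\<integral>\<^sup>+\<omega>. 2 * g (X \<omega>, Y \<omega>) + 2 * g (X \<omega>, Y' \<omega>) \<partial>M)"
    unfolding g_def prod.sel by (intro nn_integral_mono sq_nrm_diff_le_through)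
  also have "\<dots> = 2 * (\<integral>\<^sup>+\<omega>. g (X \<omega>, Y \<omega>) \<partial>M) + 2 * (\<integral>\<^sup>+\<omega>. g (X \<omega>, Y' \<omega>) \<partial>M)"
    by (simp add: nn_integral_add nn_integral_cmult)
  also have "(\<integral>\<^sup>+\<omega>. g (X \<omega>, Y' \<omega>) \<partial>M) = (\<integral>\<^sup>+\<omega>. g (X \<omega>, Y \<omega>) \<partial>M)"
    by (rule nn_integral_cond_indep_copy_swap) (use assms in measurable)
  also have "2 * (\<integral>\<^sup>+\<omega>. g (X \<omega>, Y \<omega>) \<partial>M) + 2 * (\<integral>\<^sup>+\<omega>. g (X \<omega>, Y \<omega>) \<partial>M)
      \<le> 2 * (2 * risk M X Y loss f) + 2 * (2 * risk M X Y loss f)"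
    using risk_bound by (intro add_mono mult_left_mono) auto
  also have "\<dots> = 8 * risk M X Y loss f"
    by (simp add: mult.assoc[symmetric] distrib_right[symmetric])
  finally show ?thesis .
qed

theorem risk_add_adv_risk_lower_bound:
  fixes X :: "'a \<Rightarrow> 'x::real_normed_vector"
  assumes "is_norm N" and "0 \<le> \<epsilon>" and "cond_indep_copy M X Y Y'"
    and "X \<in> borel_measurable M" "Y \<in> borel_measurable M" "Y' \<in> borel_measurable M"
      "f \<in> borel_measurable borel" "nrm \<in> borel_measurable borel"
    and "(\<lambda>\<omega>. loss (f (X \<omega>)) (Y \<omega>)) \<in> borel_measurable M"
    and "(\<lambda>\<omega>. adv_loss N \<epsilon> loss f (X \<omega>) (Y \<omega>)) \<in> borel_measurable M"
    and "\<And>\<omega> z. \<omega> \<in> space M \<Longrightarrow> ennreal ((nrm (f z - Y \<omega>))\<^sup>2) \<le> 2 * loss (f z) (Y \<omega>)"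
  shows "ennreal (1/6) * max (smooth_factor M N \<epsilon> nrm X f) (\<integral>\<^sup>+\<omega>. ennreal ((nrm (Y \<omega> - Y' \<omega>))\<^sup>2) \<partial>M)
    \<le> risk M X Y loss f + adv_risk M N \<epsilon> X Y loss f"
proof -
  define R where "R = risk M X Y loss f"
  define A where "A = adv_risk M N \<epsilon> X Y loss f"
  have "smooth_factor M N \<epsilon> nrm X f \<le> 4 * (R + A)"
    using smooth_factor_le_risks[OF assms(11,9,10)] unfolding R_def A_def by (simp add: distrib_left)
  moreover have "(\<integral>\<^sup>+\<omega>. ennreal ((nrm (Y \<omega> - Y' \<omega>))\<^sup>2) \<partial>M) \<le> 4 * (R + A)"
  proof -
    have "(\<integral>\<^sup>+\<omega>. ennreal ((nrm (Y \<omega> - Y' \<omega>))\<^sup>2) \<partial>M) \<le> 8 * R"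
      unfolding R_def by (rule cond_indep_copy_dispersion_le_risk) (use assms in auto)
    also have "\<dots> = 4 * (R + R)"
      by (simp add: distrib_left mult.assoc[symmetric] distrib_right[symmetric])
    also have "\<dots> \<le> 4 * (R + A)"
      using risk_le_adv_risk[OF assms(1,2)] unfolding R_def A_def by (intro mult_left_mono add_left_mono) auto
    finally show ?thesis .
  qed
  ultimately have "ennreal (1/6) * max (smooth_factor M N \<epsilon> nrm X f) (\<integral>\<^sup>+\<omega>. ennreal ((nrm (Y \<omega> - Y' \<omega>))\<^sup>2) \<partial>M)
      \<le> ennreal (1/6) * 4 * (R + A)"
    by (simp add: mult.assoc mult_left_mono)
  also have "\<dots> \<le> 1 * (R + A)"
  proof (rule mult_right_mono)
    have "ennreal (1/6) * 4 = ennreal (2/3)"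
      using ennreal_mult[of "1/6" 4] by simp
    then show "ennreal (1/6) * 4 \<le> 1"
      by (simp only:) (simp add: ennreal_le_1)
  qed simp
  finally show ?thesis
    unfolding R_def A_def by simp
qed

end

lemma borel_measurable_vec_nth [measurable]: "(\<lambda>u::real^'k. u $ j) \<in> borel_measurable borel"
  by (intro borel_measurable_continuous_onI continuous_intros)

lemma borel_measurable_l1norm: "l1norm \<in> borel_measurable borel"
  unfolding l1norm_def by measurable

lemma l1norm_nonneg: "0 \<le> l1norm z"
  unfolding l1norm_def by (simp add: sum_nonneg)

lemma l1norm_triangle: "l1norm (a + b) \<le> l1norm a + l1norm b"
  unfolding l1norm_def by (simp add: sum.distrib[symmetric] sum_mono abs_triangle_ineq)

lemma l1norm_minus: "l1norm (- z) = l1norm z"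
  unfolding l1norm_def by simp

lemma l1norm_diff_axis:
  assumes "u \<in> unit_simplex"
  shows "l1norm (u - axis c 1) = 2 * (1 - u $ c)"
proof -
  have nonneg: "\<And>j. 0 \<le> u $ j" and total: "(\<Sum>j\<in>UNIV. u $ j) = 1"
    using assms unfolding unit_simplex_def by auto
  have rest: "(\<Sum>j\<in>UNIV - {c}. u $ j) = 1 - u $ c"
    using total sum.remove[of UNIV c "\<lambda>j. u $ j"] by simp
  have "u $ c \<le> 1"
    using total nonneg member_le_sum[of c UNIV "\<lambda>j. u $ j"] by simp
  have "l1norm (u - axis c 1) = \<bar>u $ c - 1\<bar> + (\<Sum>j\<in>UNIV - {c}. \<bar>u $ j - axis c 1 $ j\<bar>)"
    unfolding l1norm_def by (subst sum.remove[of UNIV c]) (auto simp: axis_def)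
  also have "(\<Sum>j\<in>UNIV - {c}. \<bar>u $ j - axis c 1 $ j\<bar>) = (\<Sum>j\<in>UNIV - {c}. u $ j)"
    by (rule sum.cong) (auto simp: axis_def nonneg)
  finally show ?thesis
    using rest \<open>u $ c \<le> 1\<close> by simp
qed

lemma two_mul_sq_one_minus_le_minus_ln:
  fixes t :: real
  assumes "0 < t" and "t \<le> 1"
  shows "2 * (1 - t)\<^sup>2 \<le> - ln t"
proof -
  define \<phi> where "\<phi> s = - ln s - 2 * (1 - s)\<^sup>2" for s :: real
  have "\<phi> 1 \<le> \<phi> t"
  proof (rule DERIV_nonpos_imp_nonincreasing[OF assms(2)])
    fix s assume "t \<le> s" "s \<le> 1"
    then have "0 < s"
      using assms by linarith
    then have "(\<phi> has_real_derivative - ((2 * s - 1)\<^sup>2) / s) (at s)"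
      unfolding \<phi>_def
      by (auto intro!: derivative_eq_intros simp: field_simps power2_eq_square)
    moreover have "- ((2 * s - 1)\<^sup>2) / s \<le> 0"
      using \<open>0 < s\<close> by (simp add: divide_nonpos_pos)
    ultimately show "\<exists>y. DERIV \<phi> s :> y \<and> y \<le> 0"
      by blast
  qed
  then show ?thesis
    unfolding \<phi>_def by simp
qed

lemma sq_l1norm_diff_le_kl_loss:
  assumes "u \<in> unit_simplex" and "y \<in> basis_vecs"
  shows "ennreal ((l1norm (u - y))\<^sup>2) \<le> 2 * kl_loss u y"
proof -
  obtain c where y: "y = axis c 1"
    using assms(2) unfolding basis_vecs_def by blast
  have support: "{j. 0 < y $ j} = {c}"
    unfolding y by (auto simp: axis_def)
  show ?thesis
  proof (cases "u $ c \<le> 0")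
    case True
    then have "\<exists>j. 0 < y $ j \<and> u $ j \<le> 0"
      using support by blast
    then show ?thesis
      by (simp add: kl_loss_def)
  next
    case False
    have "u $ c \<le> 1"
      using l1norm_diff_axis[OF assms(1), of c] l1norm_nonneg[of "u - axis c 1"] by simp
    moreover have "(l1norm (u - y))\<^sup>2 = 4 * (1 - u $ c)\<^sup>2"
      by (simp add: y l1norm_diff_axis[OF assms(1)] power2_eq_square algebra_simps)
    ultimately have "(l1norm (u - y))\<^sup>2 \<le> 2 * - ln (u $ c)"
      using two_mul_sq_one_minus_le_minus_ln[of "u $ c"] False by simp
    then have "ennreal ((l1norm (u - y))\<^sup>2) \<le> ennreal (2 * - ln (u $ c))"
      by (rule ennreal_leI)
    also have "\<dots> = 2 * ennreal (- ln (u $ c))"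
      using ennreal_mult'[of 2 "- ln (u $ c)"] by simp
    also have "ennreal (- ln (u $ c)) = kl_loss u y"
      using support False by (simp add: kl_loss_def y axis_def ln_div)
    finally show ?thesis .
  qed
qed

lemma kl_loss_eq_sum:
  "kl_loss u v = (if \<exists>j. 0 < v $ j \<and> u $ j \<le> 0 then \<infinity>
     else ennreal (\<Sum>j\<in>UNIV. if 0 < v $ j then v $ j * ln (v $ j / u $ j) else 0))"
  unfolding kl_loss_def using sum.inter_filter[of UNIV "\<lambda>j. v $ j * ln (v $ j / u $ j)" "\<lambda>j. 0 < v $ j"]
  by simp

lemma borel_measurable_kl_loss:
  assumes [measurable]: "u \<in> borel_measurable M" "v \<in> borel_measurable M"
  shows "(\<lambda>\<omega>. kl_loss (u \<omega>) (v \<omega>)) \<in> borel_measurable M"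
  unfolding kl_loss_eq_sum by measurable

lemma borel_measurable_sq_loss:
  assumes [measurable]: "u \<in> borel_measurable M" "v \<in> borel_measurable M"
  shows "(\<lambda>\<omega>. sq_loss (u \<omega>) (v \<omega>)) \<in> borel_measurable M"
  unfolding sq_loss_def by measurable

lemma two_mul_sq_loss: "2 * sq_loss u v = ennreal ((u - v)\<^sup>2)"
  unfolding sq_loss_def by (simp add: ennreal_mult'' flip: ennreal_numeral ennreal_mult)

theorem corollary1:
  fixes M :: "'a measure" and N :: "real ^ 'd \<Rightarrow> real" and \<epsilon> :: real
    and X :: "'a \<Rightarrow> real ^ 'd"
  assumes "prob_space M" and "is_norm N" and "0 \<le> \<epsilon>" and "X \<in> borel_measurable M"
  shows
   "(\<forall>(Y :: 'a \<Rightarrow> real) Y' (f :: real ^ 'd \<Rightarrow> real).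
       Y \<in> borel_measurable M \<and> Y' \<in> borel_measurable M \<and> cond_indep_copy M X Y Y' \<and>
       f \<in> borel_measurable borel \<and>
       (\<lambda>\<omega>. adv_loss N \<epsilon> sq_loss f (X \<omega>) (Y \<omega>)) \<in> borel_measurable M \<and>
       (\<lambda>\<omega>. loc_var N \<epsilon> abs f (X \<omega>)) \<in> borel_measurable M
     \<longrightarrow> risk M X Y sq_loss f + adv_risk M N \<epsilon> X Y sq_loss f
         \<ge> ennreal (1/6) * max (smooth_factor M N \<epsilon> abs X f)
                                (\<integral>\<^sup>+ \<omega>. ennreal ((\<bar>Y \<omega> - Y' \<omega>\<bar>)\<^sup>2) \<partial>M))
    \<and>
    (\<forall>(Y :: 'a \<Rightarrow> real ^ 'k) Y' (f :: real ^ 'd \<Rightarrow> real ^ 'k).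
       1 < CARD('k) \<and>
       Y \<in> borel_measurable M \<and> Y' \<in> borel_measurable M \<and> cond_indep_copy M X Y Y' \<and>
       (\<forall>\<omega>\<in>space M. Y \<omega> \<in> basis_vecs) \<and>
       f \<in> borel_measurable borel \<and> (\<forall>x. f x \<in> unit_simplex) \<and>
       (\<lambda>\<omega>. adv_loss N \<epsilon> kl_loss f (X \<omega>) (Y \<omega>)) \<in> borel_measurable M \<and>
       (\<lambda>\<omega>. loc_var N \<epsilon> l1norm f (X \<omega>)) \<in> borel_measurable M
     \<longrightarrow> risk M X Y kl_loss f + adv_risk M N \<epsilon> X Y kl_loss f
         \<ge> ennreal (1/6) * max (smooth_factor M N \<epsilon> l1norm X f)
                                (\<integral>\<^sup>+ \<omega>. ennreal ((l1norm (Y \<omega> - Y' \<omega>))\<^sup>2) \<partial>M))"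
  apply (intro conjI allI impI; elim conjE)
  subgoal for Y Y' f
    by (rule risk_add_adv_risk_lower_bound[where nrm=abs])
      (use assms in \<open>auto simp: two_mul_sq_loss abs_triangle_ineq
        intro: borel_measurable_sq_loss\<close>)
  subgoal for Y Y' f
    by (rule risk_add_adv_risk_lower_bound[where nrm=l1norm])
      (use assms in \<open>auto simp: l1norm_nonneg l1norm_triangle l1norm_minus borel_measurable_l1norm
        sq_l1norm_diff_le_kl_loss intro: borel_measurable_kl_loss\<close>)
  done

end
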